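(* Let $s>0$ and let $f:[0,\infty)\to\mathbb R$ be twice differentiable with $\int_0^s (f'(u))^2du<\infty$. Let $\omega(\tau,x)$ be a solution of the heat equation $\omega_\tau=\frac12\omega_{xx}$; in particular, $\omega(\tau,x)=\frac1{2\pi}\int_{-\infty}^\infty \Pi(y)e^{-\frac12 y^2\tau+iyx}\,dy$ for an arbitrary function $\Pi$ for which this integral is well defined. Then $$w(t,a)=e^{\frac12\int_t^s (f'(u))^2du+af'(t)}\,\omega\Big(s-t,\;a+\int_t^s f'(u)\,du\Big)$$ is a solution of $$-w_t(t,a)+f''(t)\,a\,w(t,a)=\frac12 w_{aa}(t,a),\quad (t,a)\in[0,s)\times\mathbb R^+.$$ *)

theory Defs
  imports "HOL-Analysis.Analysis"
begin

definition w_fun :: "(real \<Rightarrow> real) \<Rightarrow> real \<Rightarrow> (real \<Rightarrow> real \<Rightarrow> 'v::real_normed_vector)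
                      \<Rightarrow> real \<Rightarrow> real \<Rightarrow> 'v" where
  "w_fun f' s \<omega> t a =
     exp (1/2 * integral {t..s} (\<lambda>u. (f' u)\<^sup>2) + a * f' t) *\<^sub>R
       \<omega> (s - t) (a + integral {t..s} f')"

end

theory Submission
  imports Defs
begin

text \<open>Writing \<open>w(t,a) = E(t,a) \<omega>(s - t, X(t,a))\<close> with the exponential weight \<open>E\<close> and the shifted
  argument \<open>X(t,a) = a + \<integral>\<^sub>t\<^sup>s f'\<close>, one has \<open>\<partial>\<^sub>aE = f'(t) E\<close>, \<open>\<partial>\<^sub>aX = 1\<close>,
  \<open>\<partial>\<^sub>tE = (a f''(t) - f'(t)\<^sup>2/2) E\<close> and \<open>\<partial>\<^sub>tX = -f'(t)\<close>. Hence
  \<open>-w\<^sub>t + f''(t) a w = E (f'(t)\<^sup>2/2 \<omega> + \<omega>\<^sub>\<tau> + f'(t) \<omega>\<^sub>x)\<close> and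
  \<open>w\<^sub>a\<^sub>a/2 = E (f'(t)\<^sup>2/2 \<omega> + f'(t) \<omega>\<^sub>x + \<omega>\<^sub>x\<^sub>x/2)\<close>, which agree by the heat equation.\<close>

definition w_weight :: "(real \<Rightarrow> real) \<Rightarrow> real \<Rightarrow> real \<Rightarrow> real \<Rightarrow> real" where
  "w_weight f' s t a = exp (1/2 * integral {t..s} (\<lambda>u. (f' u)\<^sup>2) + a * f' t)"

definition w_arg :: "(real \<Rightarrow> real) \<Rightarrow> real \<Rightarrow> real \<Rightarrow> real \<Rightarrow> real" where
  "w_arg f' s t a = a + integral {t..s} f'"

lemma w_fun_eq: "w_fun f' s \<omega> t a = w_weight f' s t a *\<^sub>R \<omega> (s - t) (w_arg f' s t a)"
  by (simp add: w_fun_def w_weight_def w_arg_def)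

lemma has_vector_derivative_compose_pair:
  fixes \<omega> :: "real \<Rightarrow> real \<Rightarrow> 'v::real_normed_vector"
  assumes \<omega>: "((\<lambda>z. \<omega> (fst z) (snd z)) has_derivative (\<lambda>h. fst h *\<^sub>R \<omega>\<^sub>1 + snd h *\<^sub>R \<omega>\<^sub>2))
      (at (p t, q t))"
    and p: "(p has_real_derivative p') (at t within S)"
    and q: "(q has_real_derivative q') (at t within S)"
  shows "((\<lambda>t. \<omega> (p t) (q t)) has_vector_derivative p' *\<^sub>R \<omega>\<^sub>1 + q' *\<^sub>R \<omega>\<^sub>2) (at t within S)"
proof -
  have pq: "((\<lambda>t. (p t, q t)) has_derivative (\<lambda>h. (h * p', h * q'))) (at t within S)"
    using p q unfolding has_field_derivative_def
    by (auto intro!: derivative_eq_intros simp: mult.commute)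
  have "((\<lambda>t. \<omega> (p t) (q t)) has_derivative (\<lambda>h. (h * p') *\<^sub>R \<omega>\<^sub>1 + (h * q') *\<^sub>R \<omega>\<^sub>2))
      (at t within S)"
    using diff_chain_within[OF pq has_derivative_at_withinI[OF \<omega>]] by (simp add: o_def)
  then show ?thesis
    unfolding has_vector_derivative_def
    by (rule has_derivative_eq_rhs) (simp add: fun_eq_iff scaleR_add_right)
qed

lemma has_vector_derivative_w_weight_space:
  assumes "(\<Phi> has_vector_derivative \<Phi>') (at (w_arg f' s t b))"
  shows "((\<lambda>a. w_weight f' s t a *\<^sub>R \<Phi> (w_arg f' s t a)) has_vector_derivative
      w_weight f' s t b *\<^sub>R (f' t *\<^sub>R \<Phi> (w_arg f' s t b) + \<Phi>')) (at b)"
proof -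
  have weight: "((\<lambda>a. w_weight f' s t a) has_real_derivative w_weight f' s t b * f' t) (at b)"
    unfolding w_weight_def by (auto intro!: derivative_eq_intros)
  have "((\<lambda>a. w_arg f' s t a) has_vector_derivative 1) (at b)"
    unfolding w_arg_def by (auto intro!: derivative_eq_intros)
  from vector_diff_chain_at[OF this assms]
  have "((\<lambda>a. \<Phi> (w_arg f' s t a)) has_vector_derivative \<Phi>') (at b)"
    by (simp add: o_def)
  from has_vector_derivative_scaleR[OF weight this] show ?thesis
    by (simp add: algebra_simps)
qed

lemma has_vector_derivative_w_fun_time:
  fixes f' f'' :: "real \<Rightarrow> real" and r s t a :: real
    and \<omega> :: "real \<Rightarrow> real \<Rightarrow> 'v::real_normed_vector"
  defines "x \<equiv> w_arg f' s t a"
  assumes f'_cont: "continuous_on {r..s} f'"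
    and t: "t \<in> {r..s}" and S: "S \<subseteq> {r..s}"
    and f'_deriv: "(f' has_real_derivative f'' t) (at t within S)"
    and \<omega>_deriv: "((\<lambda>z. \<omega> (fst z) (snd z)) has_derivative
      (\<lambda>h. fst h *\<^sub>R \<omega>\<^sub>\<tau> + snd h *\<^sub>R \<omega>\<^sub>x)) (at (s - t, x))"
  shows "((\<lambda>t. w_fun f' s \<omega> t a) has_vector_derivative
      w_weight f' s t a *\<^sub>R ((a * f'' t - (f' t)\<^sup>2 / 2) *\<^sub>R \<omega> (s - t) x - \<omega>\<^sub>\<tau> - f' t *\<^sub>R \<omega>\<^sub>x))
    (at t within S)"
proof -
  have lower_limit: "((\<lambda>t. integral {t..s} g) has_real_derivative - g t) (at t within S)"
    if "continuous_on {r..s} g" for g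
    using DERIV_subset[OF integral_has_real_derivative'[OF that t] S] .
  have "continuous_on {r..s} (\<lambda>u. (f' u)\<^sup>2)"
    using f'_cont by (intro continuous_intros)
  from lower_limit[OF this] have weight: "((\<lambda>t. w_weight f' s t a) has_real_derivative
      w_weight f' s t a * (a * f'' t - (f' t)\<^sup>2 / 2)) (at t within S)"
    unfolding w_weight_def
    by (auto intro!: derivative_eq_intros f'_deriv simp: algebra_simps)
  have arg: "((\<lambda>t. w_arg f' s t a) has_real_derivative - f' t) (at t within S)"
    unfolding w_arg_def using lower_limit[OF f'_cont]
    by (auto intro!: derivative_eq_intros)
  have "((\<lambda>t. s - t) has_real_derivative - 1) (at t within S)"
    by (auto intro!: derivative_eq_intros)
  from has_vector_derivative_compose_pair[where p = "\<lambda>t. s - t", OF _ this arg] \<omega>_deriv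
  have "((\<lambda>t. \<omega> (s - t) (w_arg f' s t a)) has_vector_derivative - \<omega>\<^sub>\<tau> - f' t *\<^sub>R \<omega>\<^sub>x)
      (at t within S)"
    by (simp add: x_def)
  from has_vector_derivative_scaleR[OF weight this] show ?thesis
    unfolding w_fun_eq x_def by (simp add: algebra_simps)
qed

lemma has_vector_derivative_w_fun_space:
  fixes f' :: "real \<Rightarrow> real" and s t a :: real
    and \<omega> :: "real \<Rightarrow> real \<Rightarrow> 'v::real_normed_vector" and \<omega>\<^sub>x :: "real \<Rightarrow> 'v"
  defines "wa \<equiv> \<lambda>b. w_weight f' s t b *\<^sub>R
      (f' t *\<^sub>R \<omega> (s - t) (w_arg f' s t b) + \<omega>\<^sub>x (w_arg f' s t b))"
  assumes \<omega>_x: "\<And>y. ((\<lambda>y. \<omega> (s - t) y) has_vector_derivative \<omega>\<^sub>x y) (at y)"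
    and \<omega>_xx: "(\<omega>\<^sub>x has_vector_derivative \<omega>\<^sub>x\<^sub>x) (at (w_arg f' s t a))"
  shows "((\<lambda>c. w_fun f' s \<omega> t c) has_vector_derivative wa b) (at b)"
    and "(wa has_vector_derivative w_weight f' s t a *\<^sub>R
      (f' t *\<^sub>R (f' t *\<^sub>R \<omega> (s - t) (w_arg f' s t a) + \<omega>\<^sub>x (w_arg f' s t a))
        + (f' t *\<^sub>R \<omega>\<^sub>x (w_arg f' s t a) + \<omega>\<^sub>x\<^sub>x))) (at a)"
proof -
  show "((\<lambda>c. w_fun f' s \<omega> t c) has_vector_derivative wa b) (at b)"
    using has_vector_derivative_w_weight_space[OF \<omega>_x] by (simp add: w_fun_eq wa_def)
  have "((\<lambda>y. f' t *\<^sub>R \<omega> (s - t) y + \<omega>\<^sub>x y) has_vector_derivative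
      f' t *\<^sub>R \<omega>\<^sub>x (w_arg f' s t a) + \<omega>\<^sub>x\<^sub>x) (at (w_arg f' s t a))"
    using has_vector_derivative_add[OF has_vector_derivative_scaleR[OF DERIV_const \<omega>_x] \<omega>_xx]
    by simp
  from has_vector_derivative_w_weight_space[OF this] show "(wa has_vector_derivative
      w_weight f' s t a *\<^sub>R (f' t *\<^sub>R (f' t *\<^sub>R \<omega> (s - t) (w_arg f' s t a) + \<omega>\<^sub>x (w_arg f' s t a))
        + (f' t *\<^sub>R \<omega>\<^sub>x (w_arg f' s t a) + \<omega>\<^sub>x\<^sub>x))) (at a)"
    unfolding wa_def .
qed

lemma heat_gauge_identity:
  fixes \<omega>\<^sub>0 \<omega>\<^sub>\<tau> \<omega>\<^sub>x \<omega>\<^sub>x\<^sub>x :: "'v::real_vector"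
  assumes "\<omega>\<^sub>\<tau> = (1/2) *\<^sub>R \<omega>\<^sub>x\<^sub>x"
  shows "- (E *\<^sub>R ((a * h - g\<^sup>2 / 2) *\<^sub>R \<omega>\<^sub>0 - \<omega>\<^sub>\<tau> - g *\<^sub>R \<omega>\<^sub>x)) + (h * a) *\<^sub>R (E *\<^sub>R \<omega>\<^sub>0)
    = (1/2) *\<^sub>R (E *\<^sub>R (g *\<^sub>R (g *\<^sub>R \<omega>\<^sub>0 + \<omega>\<^sub>x) + (g *\<^sub>R \<omega>\<^sub>x + \<omega>\<^sub>x\<^sub>x)))"
  by (simp add: assms algebra_simps power2_eq_square) (simp flip: scaleR_add_left)

theorem theorem3:
  fixes s :: real
    and f f' f'' :: "real \<Rightarrow> real"
    and \<omega> \<omega>\<tau> \<omega>x \<omega>xx :: "real \<Rightarrow> real \<Rightarrow> 'v::real_normed_vector"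
  assumes s_pos: "s > 0"
    and f_deriv: "\<And>u. u \<ge> 0 \<Longrightarrow> (f has_real_derivative f' u) (at u within {0..})"
    and f'_deriv: "\<And>u. u \<ge> 0 \<Longrightarrow> (f' has_real_derivative f'' u) (at u within {0..})"
    and f'_sq_int: "(\<lambda>u. (f' u)\<^sup>2) integrable_on {0..s}"
    and \<omega>_diff: "\<And>\<tau> x. \<tau> > 0 \<Longrightarrow>
        ((\<lambda>p. \<omega> (fst p) (snd p)) has_derivative
           (\<lambda>h. fst h *\<^sub>R \<omega>\<tau> \<tau> x + snd h *\<^sub>R \<omega>x \<tau> x)) (at (\<tau>, x))"
    and \<omega>x_diff: "\<And>\<tau> x. \<tau> > 0 \<Longrightarrow> ((\<lambda>y. \<omega>x \<tau> y) has_vector_derivative \<omega>xx \<tau> x) (at x)"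
    and heat: "\<And>\<tau> x. \<tau> > 0 \<Longrightarrow> \<omega>\<tau> \<tau> x = (1/2) *\<^sub>R \<omega>xx \<tau> x"
  shows "\<forall>t \<in> {0..<s}. \<forall>a > 0. \<exists>wt wa waa.
           ((\<lambda>t'. w_fun f' s \<omega> t' a) has_vector_derivative wt) (at t within {0..<s}) \<and>
           (\<forall>b > 0. ((\<lambda>c. w_fun f' s \<omega> t c) has_vector_derivative wa b) (at b)) \<and>
           (wa has_vector_derivative waa) (at a) \<and>
           - wt + (f'' t * a) *\<^sub>R w_fun f' s \<omega> t a = (1/2) *\<^sub>R waa"
proof (intro ballI allI impI)
  fix t a :: real
  assume t: "t \<in> {0..<s}"
  then have \<tau>: "s - t > 0" by simp
  have "continuous_on {0..} f'"
    by (rule DERIV_continuous_on[OF f'_deriv]) simp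
  then have f'_cont: "continuous_on {0..s} f'"
    by (rule continuous_on_subset) auto
  have f''_t: "(f' has_real_derivative f'' t) (at t within {0..<s})"
    by (rule DERIV_subset[OF f'_deriv]) (use t in auto)
  have \<omega>_x: "((\<lambda>y. \<omega> (s - t) y) has_vector_derivative \<omega>x (s - t) y) (at y)" for y
    using has_vector_derivative_compose_pair[where p = "\<lambda>_. s - t" and q = "\<lambda>y. y" and t = y,
        OF _ DERIV_const DERIV_ident] \<omega>_diff[OF \<tau>, of y] by simp
  have "t \<in> {0..s}" "{0..<s} \<subseteq> {0..s}" using t by auto
  note time = has_vector_derivative_w_fun_time[where f'' = f'', OF f'_cont this f''_t
      \<omega>_diff[OF \<tau>, of "w_arg f' s t a"]]
  note space = has_vector_derivative_w_fun_space[where f' = f' and s = s and t = t and a = a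
      and \<omega> = \<omega> and \<omega>\<^sub>x = "\<omega>x (s - t)", OF \<omega>_x \<omega>x_diff[OF \<tau>]]
  show "\<exists>wt wa waa.
      ((\<lambda>t'. w_fun f' s \<omega> t' a) has_vector_derivative wt) (at t within {0..<s}) \<and>
      (\<forall>b > 0. ((\<lambda>c. w_fun f' s \<omega> t c) has_vector_derivative wa b) (at b)) \<and>
      (wa has_vector_derivative waa) (at a) \<and>
      - wt + (f'' t * a) *\<^sub>R w_fun f' s \<omega> t a = (1/2) *\<^sub>R waa"
    by (intro exI conjI allI impI, rule time, rule space(1), rule space(2),
        unfold w_fun_eq, rule heat_gauge_identity[OF heat[OF \<tau>]])
qed

end
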